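(* Let $\Sigma$ be a signature and $\equiv$ an operad congruence of $T(\Sigma)$ which is compatible with the degree and of finite type. Then the linear map $\phi:\mathbf N(T(\Sigma)/_\equiv)\to\mathbf N(T(\Sigma))$ defined, for every reduced word $x$ on $T(\Sigma)/_\equiv$, by $$\phi(E_x)=\sum_{f\text{ reduced }\Sigma\text{-forest}}[\pi_\equiv(f)=x]\;E_f$$ is a well-defined injective Hopf algebra morphism.
   Context: $\mathbb K$ is a field of characteristic zero; $[P]$ is $1$ if $P$ holds and $0$ otherwise. A signature is a set $\Sigma$ with an arity map $|\cdot|:\Sigma\to\mathbb N$; $\Sigma(n)$ is the set of elements of arity $n$. A $\Sigma$-term is either the leaf $\bot$ or $s(t_1,\dots,t_n)$ with $s\in\Sigma(n)$ and $\Sigma$-terms $t_i$; its degree is the number of internal nodes, its arity $|t|$ the number of leaves. $T(\Sigma)$ is the free nonsymmetric operad on $\Sigma$ (composition $t[t_1,\dots,t_{|t|}]$ grafts $t_i$ onto the $i$-th leaf of $t$, partial composition $\circ_i$ grafts onto the $i$-th leaf, unit $\bot$). A $\Sigma$-forest is a finite word of terms; it is reduced if no term is $\bot$. An operad congruence of $T(\Sigma)$ is an equivalence relation $\equiv$ such that $t\equiv t'$ implies $|t|=|t'|$, $t\circ_i s\equiv t'\circ_i s$ and $s\circ_j t\equiv s\circ_j t'$ for all $s$ and valid $i,j$. It is compatible with the degree if $t\equiv t'$ implies $\deg t=\deg t'$, and of finite type if all classes are finite. $\pi_\equiv:T(\Sigma)\to T(\Sigma)/_\equiv$ is the canonical projection,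 extended letterwise to words: $\pi_\equiv(t_1\cdots t_k)=\pi_\equiv(t_1)\cdots\pi_\equiv(t_k)$. Natural Hopf algebra: for a nonsymmetric operad $\mathcal O$ with unit $1$ which is finitely factorizable (each $x$ has finitely many factorizations $x=y[y'_1,\dots,y'_{|y|}]$) and has a grading $\deg$ ($\deg^{-1}(0)=\{1\}$, additive under composition), $\mathbf N(\mathcal O)$ is the vector space with basis $E_w$ indexed by words $w$ on $\mathcal O\setminus\{1\}$ (reduced words), with product $E_{w_1}E_{w_2}=E_{w_1w_2}$ and coproduct the unique algebra morphism with $\Delta E_x=\sum_{y\in\mathcal O}\sum_{(y'_1,\dots,y'_{|y|})}[x=y[y'_1,\dots,y'_{|y|}]]\,E_{\mathrm{rd}(y)}\otimes E_{\mathrm{rd}(y'_1\cdots y'_{|y|})}$ for $x\in\mathcal O$, where $\mathrm{rd}$ deletes the letters equal to $1$ from a word; it is a graded Hopf algebra. Under the hypotheses, $T(\Sigma)/_\equiv$ is finitely factorizable and graded by the degree of representatives, so $\mathbf N(T(\Sigma)/_\equiv)$ is defined; $\mathbf N(T(\Sigma))$ has basis $E_f$ indexed by reduced $\Sigma$-forests. *)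

theory Defs
  imports Main
begin

datatype 'f sterm = Bot | Node 'f "'f sterm list"

inductive wf_term :: "'f set \<Rightarrow> ('f \<Rightarrow> nat) \<Rightarrow> 'f sterm \<Rightarrow> bool" for S ar where
  wf_Bot: "wf_term S ar Bot"
| wf_Node: "s \<in> S \<Longrightarrow> length ts = ar s \<Longrightarrow> (\<forall>t\<in>set ts. wf_term S ar t)
            \<Longrightarrow> wf_term S ar (Node s ts)"

definition terms :: "'f set \<Rightarrow> ('f \<Rightarrow> nat) \<Rightarrow> 'f sterm set" where
  "terms S ar = {t. wf_term S ar t}"

fun tarity :: "'f sterm \<Rightarrow> nat" where
  "tarity Bot = 1"
| "tarity (Node f ts) = sum_list (map tarity ts)"

fun tdeg :: "'f sterm \<Rightarrow> nat" where
  "tdeg Bot = 0"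
| "tdeg (Node f ts) = 1 + sum_list (map tdeg ts)"

text \<open>Full composition t[t_1,...,t_n]: graft the i-th term of the list on the i-th leaf.\<close>
fun tcomp :: "'f sterm \<Rightarrow> 'f sterm list \<Rightarrow> 'f sterm"
and tcomp_list :: "'f sterm list \<Rightarrow> 'f sterm list \<Rightarrow> 'f sterm list" where
  "tcomp Bot ss = (case ss of [] \<Rightarrow> Bot | s # _ \<Rightarrow> s)"
| "tcomp (Node f ts) ss = Node f (tcomp_list ts ss)"
| "tcomp_list [] ss = []"
| "tcomp_list (t # ts) ss = tcomp t (take (tarity t) ss) # tcomp_list ts (drop (tarity t) ss)"

text \<open>Partial composition t \<circ>_i s (1 \<le> i \<le> |t|): graft s on the i-th leaf of t.\<close>
definition pcomp :: "'f sterm \<Rightarrow> nat \<Rightarrow> 'f sterm \<Rightarrow> 'f sterm" where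
  "pcomp t i s = tcomp t (replicate (i - 1) Bot @ [s] @ replicate (tarity t - i) Bot)"

definition operad_congruence :: "'f set \<Rightarrow> ('f \<Rightarrow> nat) \<Rightarrow> ('f sterm \<times> 'f sterm) set \<Rightarrow> bool" where
  "operad_congruence S ar R \<longleftrightarrow>
     equiv (terms S ar) R \<and>
     (\<forall>(t, t') \<in> R. tarity t = tarity t') \<and>
     (\<forall>(t, t') \<in> R. \<forall>s \<in> terms S ar.
        (\<forall>i. 1 \<le> i \<and> i \<le> tarity t \<longrightarrow> (pcomp t i s, pcomp t' i s) \<in> R) \<and>
        (\<forall>j. 1 \<le> j \<and> j \<le> tarity s \<longrightarrow> (pcomp s j t, pcomp s j t') \<in> R))"

definition degree_compatible :: "('f sterm \<times> 'f sterm) set \<Rightarrow> bool" where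
  "degree_compatible R \<longleftrightarrow> (\<forall>(t, t') \<in> R. tdeg t = tdeg t')"

definition finite_type :: "'f set \<Rightarrow> ('f \<Rightarrow> nat) \<Rightarrow> ('f sterm \<times> 'f sterm) set \<Rightarrow> bool" where
  "finite_type S ar R \<longleftrightarrow> (\<forall>X \<in> terms S ar // R. finite X)"

definition qproj :: "('f sterm \<times> 'f sterm) set \<Rightarrow> 'f sterm \<Rightarrow> 'f sterm set" where
  "qproj R t = R `` {t}"

definition qrep :: "'f sterm set \<Rightarrow> 'f sterm" where
  "qrep X = (SOME t. t \<in> X)"

definition qarity :: "'f sterm set \<Rightarrow> nat" where
  "qarity X = tarity (qrep X)"

definition qcomp :: "('f sterm \<times> 'f sterm) set \<Rightarrow> 'f sterm set \<Rightarrow> 'f sterm set list \<Rightarrow> 'f sterm set" where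
  "qcomp R X Ys = qproj R (tcomp (qrep X) (map qrep Ys))"

text \<open>Vectors are finitely supported functions from words to the field; the basis vector
  E_w is basis w.  Elements of the tensor square are functions on pairs of words.\<close>

definition supp :: "('a \<Rightarrow> 'k::zero) \<Rightarrow> 'a set" where
  "supp a = {x. a x \<noteq> 0}"

definition basis :: "'a \<Rightarrow> 'a \<Rightarrow> 'k::{zero,one}" where
  "basis w = (\<lambda>v. if v = w then 1 else 0)"

definition lin_ext :: "('a \<Rightarrow> 'b \<Rightarrow> 'k::comm_ring_1) \<Rightarrow> ('a \<Rightarrow> 'k) \<Rightarrow> 'b \<Rightarrow> 'k" where
  "lin_ext g a = (\<lambda>v. \<Sum>u\<in>supp a. a u * g u v)"

definition red_words :: "'o set \<Rightarrow> 'o \<Rightarrow> 'o list set" where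
  "red_words C e = {w. set w \<subseteq> C \<and> e \<notin> set w}"

definition rd :: "'o \<Rightarrow> 'o list \<Rightarrow> 'o list" where
  "rd e w = filter (\<lambda>x. x \<noteq> e) w"

definition Nspace :: "'o set \<Rightarrow> 'o \<Rightarrow> ('o list \<Rightarrow> 'k::comm_ring_1) set" where
  "Nspace C e = {a. finite (supp a) \<and> supp a \<subseteq> red_words C e}"

definition Nmult :: "('o list \<Rightarrow> 'k::comm_ring_1) \<Rightarrow> ('o list \<Rightarrow> 'k) \<Rightarrow> 'o list \<Rightarrow> 'k" where
  "Nmult a b = (\<lambda>w. \<Sum>u\<in>supp a. \<Sum>v\<in>supp b. if u @ v = w then a u * b v else 0)"

definition Nunit :: "'o list \<Rightarrow> 'k::comm_ring_1" where
  "Nunit = basis []"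

definition Ncounit :: "('o list \<Rightarrow> 'k::comm_ring_1) \<Rightarrow> 'k" where
  "Ncounit a = a []"

definition Tmult :: "('o list \<times> 'o list \<Rightarrow> 'k::comm_ring_1) \<Rightarrow> ('o list \<times> 'o list \<Rightarrow> 'k)
                     \<Rightarrow> 'o list \<times> 'o list \<Rightarrow> 'k" where
  "Tmult a b = (\<lambda>w. \<Sum>u\<in>supp a. \<Sum>v\<in>supp b.
                   if (fst u @ fst v, snd u @ snd v) = w then a u * b v else 0)"

definition tensor :: "('a \<Rightarrow> 'k::comm_ring_1) \<Rightarrow> ('b \<Rightarrow> 'k) \<Rightarrow> 'a \<times> 'b \<Rightarrow> 'k" where
  "tensor a b = (\<lambda>(u, v). a u * b v)"

definition tensor_map :: "(('a \<Rightarrow> 'k::comm_ring_1) \<Rightarrow> ('c \<Rightarrow> 'k)) \<Rightarrow> (('b \<Rightarrow> 'k) \<Rightarrow> ('d \<Rightarrow> 'k))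
                          \<Rightarrow> ('a \<times> 'b \<Rightarrow> 'k) \<Rightarrow> 'c \<times> 'd \<Rightarrow> 'k" where
  "tensor_map F G t = lin_ext (\<lambda>(u, v). tensor (F (basis u)) (G (basis v))) t"

definition factorizations :: "'o set \<Rightarrow> ('o \<Rightarrow> nat) \<Rightarrow> ('o \<Rightarrow> 'o list \<Rightarrow> 'o) \<Rightarrow> 'o \<Rightarrow> ('o \<times> 'o list) set" where
  "factorizations C ar cp x =
     {(y, ys). y \<in> C \<and> set ys \<subseteq> C \<and> length ys = ar y \<and> cp y ys = x}"

definition Delta_gen :: "'o set \<Rightarrow> ('o \<Rightarrow> nat) \<Rightarrow> ('o \<Rightarrow> 'o list \<Rightarrow> 'o) \<Rightarrow> 'o \<Rightarrow> 'o
                         \<Rightarrow> 'o list \<times> 'o list \<Rightarrow> 'k::comm_ring_1" where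
  "Delta_gen C ar cp e x = (\<lambda>p. \<Sum>q\<in>factorizations C ar cp x.
      if (rd e [fst q], rd e (snd q)) = p then 1 else 0)"

text \<open>Coproduct of E_w, as the unique algebra morphism extending Delta_gen.\<close>
definition Delta_word :: "'o set \<Rightarrow> ('o \<Rightarrow> nat) \<Rightarrow> ('o \<Rightarrow> 'o list \<Rightarrow> 'o) \<Rightarrow> 'o \<Rightarrow> 'o list
                          \<Rightarrow> 'o list \<times> 'o list \<Rightarrow> 'k::comm_ring_1" where
  "Delta_word C ar cp e w = foldr (\<lambda>x acc. Tmult (Delta_gen C ar cp e x) acc) w (basis ([], []))"

definition Ncoprod :: "'o set \<Rightarrow> ('o \<Rightarrow> nat) \<Rightarrow> ('o \<Rightarrow> 'o list \<Rightarrow> 'o) \<Rightarrow> 'o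
                       \<Rightarrow> ('o list \<Rightarrow> 'k::comm_ring_1) \<Rightarrow> 'o list \<times> 'o list \<Rightarrow> 'k" where
  "Ncoprod C ar cp e = lin_ext (Delta_word C ar cp e)"

text \<open>A linear map between the connected graded Hopf algebras N(O1) and N(O2) preserving
  product, unit, coproduct and counit (a bialgebra morphism between Hopf algebras,
  hence automatically compatible with the antipodes).\<close>
definition N_hopf_morphism ::
  "'o set \<Rightarrow> ('o \<Rightarrow> nat) \<Rightarrow> ('o \<Rightarrow> 'o list \<Rightarrow> 'o) \<Rightarrow> 'o \<Rightarrow>
   'p set \<Rightarrow> ('p \<Rightarrow> nat) \<Rightarrow> ('p \<Rightarrow> 'p list \<Rightarrow> 'p) \<Rightarrow> 'p \<Rightarrow>
   (('o list \<Rightarrow> 'k::field) \<Rightarrow> ('p list \<Rightarrow> 'k)) \<Rightarrow> bool" where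
  "N_hopf_morphism C1 ar1 cp1 e1 C2 ar2 cp2 e2 \<phi> \<longleftrightarrow>
     (\<forall>a \<in> Nspace C1 e1. \<phi> a \<in> Nspace C2 e2) \<and>
     (\<forall>a \<in> Nspace C1 e1. \<forall>b \<in> Nspace C1 e1. \<phi> (\<lambda>w. a w + b w) = (\<lambda>w. \<phi> a w + \<phi> b w)) \<and>
     (\<forall>a \<in> Nspace C1 e1. \<forall>c. \<phi> (\<lambda>w. c * a w) = (\<lambda>w. c * \<phi> a w)) \<and>
     (\<forall>a \<in> Nspace C1 e1. \<forall>b \<in> Nspace C1 e1. \<phi> (Nmult a b) = Nmult (\<phi> a) (\<phi> b)) \<and>
     \<phi> Nunit = Nunit \<and>
     (\<forall>a \<in> Nspace C1 e1. Ncoprod C2 ar2 cp2 e2 (\<phi> a)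
                         = tensor_map \<phi> \<phi> (Ncoprod C1 ar1 cp1 e1 a)) \<and>
     (\<forall>a \<in> Nspace C1 e1. Ncounit (\<phi> a) = Ncounit a)"

definition fiber_forests :: "'f set \<Rightarrow> ('f \<Rightarrow> nat) \<Rightarrow> ('f sterm \<times> 'f sterm) set
                             \<Rightarrow> 'f sterm set list \<Rightarrow> 'f sterm list set" where
  "fiber_forests S ar R x = {f. f \<in> red_words (terms S ar) Bot \<and> map (qproj R) f = x}"

definition phi :: "'f set \<Rightarrow> ('f \<Rightarrow> nat) \<Rightarrow> ('f sterm \<times> 'f sterm) set
                   \<Rightarrow> ('f sterm set list \<Rightarrow> 'k::field) \<Rightarrow> 'f sterm list \<Rightarrow> 'k" where
  "phi S ar R = lin_ext (\<lambda>x. \<lambda>f. \<Sum>g\<in>fiber_forests S ar R x. basis g f)"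

end

theory Submission
  imports Defs
begin

text \<open>
  On finitely supported vectors, \<open>phi\<close> is the pullback \<open>a \<mapsto> (f \<mapsto> a (map \<pi> f))\<close>, restricted to
  reduced forests; finiteness of the classes makes all fibres of \<open>\<pi>\<close> finite. Products in \<open>N(O)\<close> are
  sums over the splittings of a word, which commute with letterwise projection, so the pullback is
  an algebra map, and injective because every reduced word on the quotient lifts. For the coproduct
  it suffices to consider a generator \<open>E\<^sub>x\<close>: once the reduced parts of both sides are fixed, the
  factorizations \<open>t = s[ss]\<close> of the elements \<open>t\<close> of the class \<open>x\<close> correspond bijectively under \<open>\<pi>\<close> to the
  factorizations \<open>x = Y[Ys]\<close> in the quotient. Indeed \<open>\<pi>\<close> is an operad morphism; degree compatibility
  makes \<open>Bot\<close> the only lift of the unit, and the remaining letters are lifted in order.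
\<close>

section \<open>Composition in the free operad\<close>

lemma length_tcomp_list [simp]: "length (tcomp_list ts ss) = length ts"
  by (induction ts arbitrary: ss) auto

lemma tcomp_take:
  shows "tarity t \<le> n \<Longrightarrow> tcomp t (take n ss) = tcomp t ss"
    and "sum_list (map tarity ts) \<le> n \<Longrightarrow> tcomp_list ts (take n ss) = tcomp_list ts ss"
proof (induction t ss and ts ss arbitrary: n and n rule: tcomp_tcomp_list.induct)
  case (1 ss)
  then show ?case by (cases ss; cases n) auto
next
  case (4 t ts ss)
  have "tcomp_list ts (drop (tarity t) (take n ss)) = tcomp_list ts (drop (tarity t) ss)"
    using "4.IH"(2)[of "n - tarity t"] "4.prems" by (simp add: drop_take)
  with "4.prems" show ?case by (simp add: min_def)
qed auto

lemma take_tcomp_list: "take k (tcomp_list ts ss) = tcomp_list (take k ts) ss"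
  by (induction ts arbitrary: k ss) (auto simp: take_Cons')

lemma drop_tcomp_list:
  "drop k (tcomp_list ts ss) = tcomp_list (drop k ts) (drop (sum_list (map tarity (take k ts))) ss)"
  by (induction ts arbitrary: k ss) (simp_all add: drop_Cons' take_Cons' drop_drop ac_simps)

lemma tcomp_list_append:
  "tcomp_list (ts @ us) ss = tcomp_list ts ss @ tcomp_list us (drop (sum_list (map tarity ts)) ss)"
  by (induction ts arbitrary: ss) (simp_all add: drop_drop ac_simps)

lemma sum_list_tarity_take_drop:
  "sum_list (map tarity ss) = sum_list (map tarity (take k ss)) + sum_list (map tarity (drop k ss))"
  by (metis append_take_drop_id map_append sum_list_append)

lemma tarity_tcomp_aux:
  shows "length ss = tarity t \<Longrightarrow> tarity (tcomp t ss) = sum_list (map tarity ss)"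
    and "length ss = sum_list (map tarity ts) \<Longrightarrow>
      sum_list (map tarity (tcomp_list ts ss)) = sum_list (map tarity ss)"
proof (induction t ss and ts ss rule: tcomp_tcomp_list.induct)
  case (1 ss)
  then show ?case by (cases ss) auto
next
  case (4 t ts ss)
  then show ?case by (simp add: sum_list_tarity_take_drop[of ss "tarity t"])
qed auto

lemma tarity_tcomp [simp]:
  "length ss = tarity t \<Longrightarrow> tarity (tcomp t ss) = sum_list (map tarity ss)"
  by (rule tarity_tcomp_aux(1))

lemma tcomp_unit_right_aux:
  shows "ss = replicate (tarity t) Bot \<Longrightarrow> tcomp t ss = t"
    and "ss = replicate (sum_list (map tarity ts)) Bot \<Longrightarrow> tcomp_list ts ss = ts"
proof (induction t ss and ts ss rule: tcomp_tcomp_list.induct)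
  case (4 t ts ss)
  then show ?case by (auto simp: drop_replicate)
qed auto

lemma tcomp_unit_right [simp]: "tcomp t (replicate (tarity t) Bot) = t"
  and tcomp_list_unit_right [simp]: "tcomp_list ts (replicate (sum_list (map tarity ts)) Bot) = ts"
  by (simp_all add: tcomp_unit_right_aux)

lemma tcomp_assoc_aux:
  shows "length ss = tarity t \<Longrightarrow> length rs = sum_list (map tarity ss) \<Longrightarrow>
      tcomp (tcomp t ss) rs = tcomp t (tcomp_list ss rs)"
    and "length ss = sum_list (map tarity ts) \<Longrightarrow> length rs = sum_list (map tarity ss) \<Longrightarrow>
      tcomp_list (tcomp_list ts ss) rs = tcomp_list ts (tcomp_list ss rs)"
proof (induction t ss and ts ss arbitrary: rs and rs rule: tcomp_tcomp_list.induct)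
  case (1 ss)
  then show ?case
    by (cases ss) (auto simp: tcomp_take(1)[of _ "length rs" rs for rs, simplified])
next
  case (4 t ts ss)
  define A where "A = tarity t"
  define B where "B = sum_list (map tarity (take A ss))"
  have lA: "length (take A ss) = A"
    using "4.prems"(1) by (simp add: A_def)
  have sum_ss: "sum_list (map tarity ss) = B + sum_list (map tarity (drop A ss))"
    unfolding B_def by (rule sum_list_tarity_take_drop)
  have ar_head: "tarity (tcomp t (take A ss)) = B"
    using lA by (simp add: A_def B_def)
  have head: "tcomp (tcomp t (take A ss)) (take B rs) = tcomp t (tcomp_list (take A ss) (take B rs))"
    using "4.IH"(1)[of "take B rs"] lA "4.prems"(2) sum_ss by (simp add: A_def B_def)
  have tail: "tcomp_list (tcomp_list ts (drop A ss)) (drop B rs)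
      = tcomp_list ts (tcomp_list (drop A ss) (drop B rs))"
    using "4.IH"(2)[of "drop B rs"] "4.prems" sum_ss by (simp add: A_def)
  have head_take: "tcomp_list (take A ss) (take B rs) = tcomp_list (take A ss) rs"
    using tcomp_take(2)[of "take A ss" B rs] by (simp add: B_def)
  show ?case
    using head tail head_take ar_head
    by (simp add: A_def[symmetric] take_tcomp_list drop_tcomp_list B_def[symmetric])
qed auto

lemma tcomp_assoc:
  "length ss = tarity t \<Longrightarrow> length rs = sum_list (map tarity ss) \<Longrightarrow>
    tcomp (tcomp t ss) rs = tcomp t (tcomp_list ss rs)"
  by (rule tcomp_assoc_aux(1))

lemma wf_term_Node_iff [simp]:
  "wf_term S ar (Node f ts) \<longleftrightarrow> f \<in> S \<and> length ts = ar f \<and> (\<forall>t\<in>set ts. wf_term S ar t)"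
proof
  assume "wf_term S ar (Node f ts)"
  then show "f \<in> S \<and> length ts = ar f \<and> (\<forall>t\<in>set ts. wf_term S ar t)"
    by (cases rule: wf_term.cases) auto
qed (auto intro: wf_Node)

lemma wf_term_tcomp_aux:
  shows "wf_term S ar t \<longrightarrow> (\<forall>s\<in>set ss. wf_term S ar s) \<longrightarrow> wf_term S ar (tcomp t ss)"
  and "(\<forall>t\<in>set ts. wf_term S ar t) \<longrightarrow> (\<forall>s\<in>set ss. wf_term S ar s) \<longrightarrow>
         (\<forall>u\<in>set (tcomp_list ts ss). wf_term S ar u)"
proof (induction t ss and ts ss rule: tcomp_tcomp_list.induct)
  case (1 ss)
  show ?case
  proof (cases ss)
    case Nil
    then show ?thesis by (simp add: wf_Bot)
  next
    case Cons
    then show ?thesis by simp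
  qed
next
  case (2 f ts ss)
  show ?case
  proof (intro impI)
    assume wf: "wf_term S ar (Node f ts)" "\<forall>s\<in>set ss. wf_term S ar s"
    then have "\<forall>u\<in>set (tcomp_list ts ss). wf_term S ar u"
      using 2 by simp
    then show "wf_term S ar (tcomp (Node f ts) ss)"
      using wf(1) by simp
  qed
next
  case (3 ss)
  show ?case by simp
next
  case (4 t ts ss)
  show ?case
  proof (intro impI)
    assume wf: "\<forall>t\<in>set (t # ts). wf_term S ar t" "\<forall>s\<in>set ss. wf_term S ar s"
    have "set (take (tarity t) ss) \<subseteq> set ss" "set (drop (tarity t) ss) \<subseteq> set ss"
      by (rule set_take_subset, rule set_drop_subset)
    then have wf_args: "\<forall>s\<in>set (take (tarity t) ss). wf_term S ar s"
      "\<forall>s\<in>set (drop (tarity t) ss). wf_term S ar s"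
      using wf(2) by blast+
    have "wf_term S ar (tcomp t (take (tarity t) ss))"
      using "4.IH"(1) wf(1) wf_args(1) by simp
    moreover have "\<forall>u\<in>set (tcomp_list ts (drop (tarity t) ss)). wf_term S ar u"
      using "4.IH"(2) wf(1) wf_args(2) by simp
    ultimately show "\<forall>u\<in>set (tcomp_list (t # ts) ss). wf_term S ar u" by simp
  qed
qed

lemma tcomp_in_terms [intro]:
  assumes "t \<in> terms S ar" and "set ss \<subseteq> terms S ar"
  shows "tcomp t ss \<in> terms S ar"
proof -
  have "\<forall>s\<in>set ss. wf_term S ar s"
    using assms(2) by (auto simp: terms_def)
  moreover have "wf_term S ar t"
    using assms(1) by (simp add: terms_def)
  ultimately show ?thesis
    using wf_term_tcomp_aux(1)[of S ar t ss] by (simp add: terms_def)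
qed

lemma tcomp_list_update:
  assumes l: "length ss = tarity t" and i: "i < length ss" and b: "ss ! i = Bot"
  shows "tcomp t (ss[i := s]) = pcomp (tcomp t ss) (sum_list (map tarity (take i ss)) + 1) s"
proof -
  define a where "a = sum_list (map tarity (take i ss))"
  define D where "D = drop (Suc i) ss"
  have ss: "ss = take i ss @ Bot # D"
    unfolding D_def using i b by (metis id_take_nth_drop)
  have sum_ss: "sum_list (map tarity ss) = a + 1 + sum_list (map tarity D)"
    by (subst ss) (simp add: a_def)
  define P where "P = replicate a Bot @ [s] @ replicate (sum_list (map tarity D)) Bot"
  have pcomp_P: "pcomp (tcomp t ss) (a + 1) s = tcomp (tcomp t ss) P"
    unfolding pcomp_def P_def using l sum_ss by simp
  have lP: "length P = sum_list (map tarity ss)"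
    using sum_ss by (simp add: P_def)
  have "tcomp_list ss P = tcomp_list (take i ss) P @ tcomp_list (Bot # D) (drop a P)"
    by (subst ss) (simp only: tcomp_list_append a_def)
  also have "tcomp_list (take i ss) P = tcomp_list (take i ss) (take a P)"
    using tcomp_take(2)[of "take i ss" a P] by (simp add: a_def)
  also have "\<dots> = take i ss"
    by (simp add: P_def a_def)
  also have "tcomp_list (Bot # D) (drop a P) = s # D"
    by (simp add: P_def)
  also have "take i ss @ s # D = ss[i := s]"
    unfolding D_def using i by (simp add: upd_conv_take_nth_drop)
  finally show ?thesis
    using pcomp_P tcomp_assoc[OF l lP] by (simp add: a_def)
qed

definition prefix_args :: "'f sterm list \<Rightarrow> nat \<Rightarrow> 'f sterm list" where
  "prefix_args ss k = take k ss @ replicate (length ss - k) Bot"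

lemma length_prefix_args [simp]: "k \<le> length ss \<Longrightarrow> length (prefix_args ss k) = length ss"
  by (simp add: prefix_args_def)

lemma prefix_args_0 [simp]: "prefix_args ss 0 = replicate (length ss) Bot"
  by (simp add: prefix_args_def)

lemma prefix_args_length [simp]: "prefix_args ss (length ss) = ss"
  by (simp add: prefix_args_def)

lemma sum_list_tarity_prefix_args:
  "k \<le> length ss \<Longrightarrow>
    sum_list (map tarity (prefix_args ss k)) = sum_list (map tarity (take k ss)) + (length ss - k)"
  by (simp add: prefix_args_def sum_list_replicate)

lemma tcomp_prefix_args_Suc:
  assumes "length ss = tarity t" and k: "k < length ss"
  shows "tcomp t (prefix_args ss (Suc k))
    = pcomp (tcomp t (prefix_args ss k)) (sum_list (map tarity (take k ss)) + 1) (ss ! k)"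
proof -
  have "length ss - k = Suc (length ss - Suc k)"
    using k by simp
  then have "prefix_args ss (Suc k) = (prefix_args ss k)[k := ss ! k]"
    using k by (simp add: prefix_args_def list_update_append take_Suc_conv_app_nth)
  moreover have "prefix_args ss k ! k = Bot" "take k (prefix_args ss k) = take k ss"
    using k by (simp_all add: prefix_args_def nth_append)
  ultimately show ?thesis
    using tcomp_list_update[of "prefix_args ss k" t k "ss ! k"] assms by simp
qed

lemma finite_list_all2:
  "(\<And>y. y \<in> set ys \<Longrightarrow> finite {x. P x y}) \<Longrightarrow> finite {xs. list_all2 P xs ys}"
proof (induction ys)
  case (Cons y ys)
  have "{xs. list_all2 P xs (y # ys)} = (\<lambda>(x, xs). x # xs) ` ({x. P x y} \<times> {xs. list_all2 P xs ys})"
    by (auto simp: list_all2_Cons2)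
  then show ?case using Cons by simp
qed simp

lemma tcomp_list_factorization:
  assumes "length ss = sum_list (map tarity ts)"
  shows "\<exists>ps. map fst ps = ts \<and> concat (map snd ps) = ss \<and>
    list_all2 (\<lambda>p u. length (snd p) = tarity (fst p) \<and> tcomp (fst p) (snd p) = u) ps (tcomp_list ts ss)"
  using assms
proof (induction ts arbitrary: ss)
  case (Cons t ts)
  then have "length (drop (tarity t) ss) = sum_list (map tarity ts)"
    by simp
  with Cons.IH obtain ps where "map fst ps = ts" "concat (map snd ps) = drop (tarity t) ss"
    "list_all2 (\<lambda>p u. length (snd p) = tarity (fst p) \<and> tcomp (fst p) (snd p) = u) ps
        (tcomp_list ts (drop (tarity t) ss))"
    by blast
  with Cons.prems show ?case
    by (intro exI[of _ "(t, take (tarity t) ss) # ps"]) auto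
qed simp

text \<open>A factorization y[ys] of a Node is either the trivial one or grafts factorizations of
  the subterms below a common root, so finiteness propagates from the subterms.\<close>

lemma finite_tcomp_factorizations: "finite {(y, ys). length ys = tarity y \<and> tcomp y ys = t}"
proof (induction t)
  case Bot
  have "{(y, ys). length ys = tarity y \<and> tcomp y ys = Bot} \<subseteq> {(Bot, [Bot])}"
  proof clarify
    fix y ys assume "length ys = tarity y" "tcomp y ys = Bot"
    then show "y = Bot \<and> ys = [Bot]" by (cases y; cases ys) auto
  qed
  then show ?case by (rule finite_subset) simp
next
  case (Node f ts)
  let ?F = "\<lambda>t. {(y, ys). length ys = tarity y \<and> tcomp y ys = t}"
  let ?graft = "\<lambda>ps. (Node f (map fst ps), concat (map snd ps))"
  have "?F (Node f ts) \<subseteq> insert (Bot, [Node f ts]) (?graft ` {ps. list_all2 (\<lambda>p t. p \<in> ?F t) ps ts})"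
  proof clarify
    fix y ys assume fact: "length ys = tarity y" "tcomp y ys = Node f ts"
      and not_graft: "(y, ys) \<notin> ?graft ` {ps. list_all2 (\<lambda>p t. p \<in> ?F t) ps ts}"
    show "y = Bot \<and> ys = [Node f ts]"
    proof (cases y)
      case Bot
      then show ?thesis using fact by (cases ys) auto
    next
      case (Node g us)
      with fact have g: "g = f" "tcomp_list us ys = ts" "length ys = sum_list (map tarity us)"
        by auto
      from tcomp_list_factorization[OF g(3)] obtain ps where ps: "map fst ps = us" "concat (map snd ps) = ys"
        "list_all2 (\<lambda>p u. length (snd p) = tarity (fst p) \<and> tcomp (fst p) (snd p) = u) ps
           (tcomp_list us ys)"
        by blast
      have "list_all2 (\<lambda>p t. p \<in> ?F t) ps ts"
        using ps(3) g(2) by (auto elim: list_all2_mono)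
      then have False
        using not_graft ps Node g by auto
      then show ?thesis ..
    qed
  qed
  moreover have "finite {ps. list_all2 (\<lambda>p t. p \<in> ?F t) ps ts}"
    by (rule finite_list_all2) (use Node in simp)
  ultimately show ?case
    using finite_subset by blast
qed

lemma finite_factorizations_tcomp: "finite (factorizations C tarity tcomp t)"
  by (rule finite_subset[OF _ finite_tcomp_factorizations[of t]]) (auto simp: factorizations_def)

section \<open>Lifting reduced words\<close>

lemma rd_map:
  assumes "\<forall>x\<in>set xs. p x = e \<longleftrightarrow> x = b"
  shows "rd e (map p xs) = map p (rd b xs)"
  using assms by (induction xs) (auto simp: rd_def)

lemma rd_lift_exists:
  assumes "p b = e" and "rd e ys = map p zs"
  shows "\<exists>xs. map p xs = ys \<and> rd b xs = zs \<and> set xs \<subseteq> insert b (set zs)"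
  using assms(2)
proof (induction ys arbitrary: zs)
  case Nil
  then show ?case by (simp add: rd_def)
next
  case (Cons y ys)
  show ?case
  proof (cases "y = e")
    case True
    with Cons obtain xs where "map p xs = ys" "rd b xs = zs" "set xs \<subseteq> insert b (set zs)"
      by (auto simp: rd_def)
    with True assms(1) show ?thesis
      by (intro exI[of _ "b # xs"]) (auto simp: rd_def)
  next
    case False
    with Cons.prems obtain z zs' where zs: "zs = z # zs'" "p z = y" "rd e ys = map p zs'"
      by (cases zs) (auto simp: rd_def)
    with Cons.IH obtain xs where "map p xs = ys" "rd b xs = zs'" "set xs \<subseteq> insert b (set zs')"
      by blast
    with zs False assms(1) show ?thesis
      by (intro exI[of _ "z # xs"]) (auto simp: rd_def)
  qed
qed

lemma rd_lift_unique:
  assumes "\<forall>x\<in>set xs \<union> set xs'. p x = e \<longleftrightarrow> x = b"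
    and "map p xs = map p xs'" and "rd b xs = rd b xs'"
  shows "xs = xs'"
  using assms
proof (induction xs arbitrary: xs')
  case (Cons x xs)
  then obtain x' xs'' where "xs' = x' # xs''" by (cases xs') auto
  with Cons show ?case by (auto simp: rd_def split: if_splits)
qed simp

section \<open>Finitely supported functions\<close>

lemma supp_basis [simp]: "supp (basis w :: _ \<Rightarrow> 'k::zero_neq_one) = {w}"
  by (auto simp: supp_def basis_def)

lemma supp_sum: "supp (\<lambda>p. \<Sum>i\<in>I. A i p) \<subseteq> (\<Union>i\<in>I. supp (A i))"
  by (auto simp: supp_def intro: ccontr dest: sum.neutral)

lemma finite_supp_sum:
  "finite I \<Longrightarrow> (\<And>i. i \<in> I \<Longrightarrow> finite (supp (A i))) \<Longrightarrow> finite (supp (\<lambda>p. \<Sum>i\<in>I. A i p))"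
  by (rule finite_subset[OF supp_sum]) auto

lemma finite_supp_mult_left:
  fixes a :: "'a \<Rightarrow> 'k::comm_ring_1"
  shows "finite (supp a) \<Longrightarrow> finite (supp (\<lambda>w. c * a w))"
  by (rule finite_subset[of _ "supp a"]) (auto simp: supp_def)

lemma convolution_eq_sum_solutions:
  fixes a :: "'a \<Rightarrow> 'k::comm_ring_1" and b :: "'b \<Rightarrow> 'k"
  assumes "finite (supp a)" "finite (supp b)" "finite {(u, v). c u v = w}"
  shows "(\<Sum>u\<in>supp a. \<Sum>v\<in>supp b. if c u v = w then a u * b v else 0)
       = (\<Sum>(u, v)\<in>{(u, v). c u v = w}. a u * b v)"
proof -
  have "(\<Sum>u\<in>supp a. \<Sum>v\<in>supp b. if c u v = w then a u * b v else 0)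
      = (\<Sum>x\<in>supp a \<times> supp b. if c (fst x) (snd x) = w then a (fst x) * b (snd x) else 0)"
    by (simp add: sum.cartesian_product case_prod_beta)
  also have "\<dots> = (\<Sum>x\<in>{x \<in> supp a \<times> supp b. c (fst x) (snd x) = w}. a (fst x) * b (snd x))"
    using assms(1,2) by (simp add: sum.inter_filter)
  also have "\<dots> = (\<Sum>(u, v)\<in>{(u, v). c u v = w}. a u * b v)"
  proof (unfold case_prod_beta, rule sum.mono_neutral_left)
    have "{p. c (fst p) (snd p) = w} = {(u, v). c u v = w}"
      by auto
    then show "finite {p. c (fst p) (snd p) = w}"
      using assms(3) by simp
  qed (auto simp: supp_def)
  finally show ?thesis .
qed

lemma Nmult_eq_sum_splits:
  fixes a b :: "'o list \<Rightarrow> 'k::comm_ring_1"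
  assumes "finite (supp a)" "finite (supp b)"
  shows "Nmult a b w = (\<Sum>k\<le>length w. a (take k w) * b (drop k w))"
proof -
  have splits: "{(u, v). u @ v = w} = (\<lambda>k. (take k w, drop k w)) ` {..length w}"
  proof (intro set_eqI iffI)
    fix x assume "x \<in> {(u, v). u @ v = w}"
    then show "x \<in> (\<lambda>k. (take k w, drop k w)) ` {..length w}"
      by (auto intro!: image_eqI[of _ _ "length (fst x)"])
  qed auto
  have inj: "inj_on (\<lambda>k. (take k w, drop k w)) {..length w}"
    by (rule inj_onI) (metis atMost_iff length_take min.absorb2 prod.inject)
  have "Nmult a b w = (\<Sum>(u, v)\<in>{(u, v). u @ v = w}. a u * b v)"
    unfolding Nmult_def by (rule convolution_eq_sum_solutions) (use assms in \<open>simp_all add: splits\<close>)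
  also have "\<dots> = (\<Sum>k\<le>length w. a (take k w) * b (drop k w))"
    unfolding splits by (simp add: sum.reindex[OF inj])
  finally show ?thesis .
qed

lemma Tmult_eq_sum_splits:
  fixes a b :: "'o list \<times> 'o list \<Rightarrow> 'k::comm_ring_1"
  assumes "finite (supp a)" "finite (supp b)"
  shows "Tmult a b (g, h)
    = (\<Sum>i\<le>length g. \<Sum>j\<le>length h. a (take i g, take j h) * b (drop i g, drop j h))"
proof -
  let ?split = "\<lambda>(i, j). ((take i g, take j h), (drop i g, drop j h))"
  have splits: "{(u, v). (fst u @ fst v, snd u @ snd v) = (g, h)} = ?split ` ({..length g} \<times> {..length h})"
  proof (intro set_eqI iffI)
    fix x assume "x \<in> {(u, v). (fst u @ fst v, snd u @ snd v) = (g, h)}"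
    then show "x \<in> ?split ` ({..length g} \<times> {..length h})"
      by (auto intro!: image_eqI[of _ _ "(length (fst (fst x)), length (snd (fst x)))"])
  qed auto
  have inj: "inj_on ?split ({..length g} \<times> {..length h})"
    by (rule inj_onI) (auto, (metis length_take min.absorb2)+)
  have "Tmult a b (g, h) = (\<Sum>(u, v)\<in>{(u, v). (fst u @ fst v, snd u @ snd v) = (g, h)}. a u * b v)"
    unfolding Tmult_def
    by (rule convolution_eq_sum_solutions)
      (use assms in \<open>simp_all only: splits finite_imageI finite_cartesian_product finite_atMost\<close>)
  also have "\<dots> = (\<Sum>i\<le>length g. \<Sum>j\<le>length h. a (take i g, take j h) * b (drop i g, drop j h))"
    unfolding splits sum.reindex[OF inj] by (simp add: sum.cartesian_product split_def)
  finally show ?thesis .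
qed

lemma Tmult_sum_sum:
  fixes A :: "'i \<Rightarrow> 'o list \<times> 'o list \<Rightarrow> 'k::comm_ring_1" and B :: "'j \<Rightarrow> 'o list \<times> 'o list \<Rightarrow> 'k"
  assumes "finite I" "finite J"
    and "\<And>i. i \<in> I \<Longrightarrow> finite (supp (A i))" "\<And>j. j \<in> J \<Longrightarrow> finite (supp (B j))"
  shows "Tmult (\<lambda>p. \<Sum>i\<in>I. A i p) (\<lambda>p. \<Sum>j\<in>J. B j p) = (\<lambda>p. \<Sum>i\<in>I. \<Sum>j\<in>J. Tmult (A i) (B j) p)"
proof (intro ext, clarify)
  fix g h :: "'o list"
  have "Tmult (\<lambda>p. \<Sum>i\<in>I. A i p) (\<lambda>p. \<Sum>j\<in>J. B j p) (g, h)
      = (\<Sum>k\<le>length g. \<Sum>l\<le>length h. \<Sum>i\<in>I. \<Sum>j\<in>J.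
           A i (take k g, take l h) * B j (drop k g, drop l h))"
    using assms by (simp add: Tmult_eq_sum_splits finite_supp_sum sum_product)
  also have "\<dots> = (\<Sum>i\<in>I. \<Sum>j\<in>J. \<Sum>k\<le>length g. \<Sum>l\<le>length h.
           A i (take k g, take l h) * B j (drop k g, drop l h))"
    by (subst sum.swap, subst (2) sum.swap, subst (3) sum.swap, subst (2) sum.swap) (rule refl)
  also have "\<dots> = (\<Sum>i\<in>I. \<Sum>j\<in>J. Tmult (A i) (B j) (g, h))"
    using assms by (simp add: Tmult_eq_sum_splits)
  finally show "Tmult (\<lambda>p. \<Sum>i\<in>I. A i p) (\<lambda>p. \<Sum>j\<in>J. B j p) (g, h)
      = (\<Sum>i\<in>I. \<Sum>j\<in>J. Tmult (A i) (B j) (g, h))" .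
qed

lemma sum_indicator_eq_card:
  "finite A \<Longrightarrow> (\<Sum>x\<in>A. if P x then 1 else 0) = (of_nat (card {x \<in> A. P x}) :: 'k::comm_ring_1)"
  by (simp add: sum.If_cases Int_def)

lemma red_words_eq_lists: "red_words C e = lists (C - {e})"
  by (auto simp: red_words_def)

lemma Nspace_iff: "a \<in> Nspace C e \<longleftrightarrow> finite (supp a) \<and> supp a \<subseteq> lists (C - {e})"
  by (simp add: Nspace_def red_words_eq_lists)

lemma finite_supp_indicator: "finite (supp (\<lambda>w. if c = w then k else 0))"
  by (rule finite_subset[of _ "{c}"]) (auto simp: supp_def)

lemma finite_supp_Delta_gen: "finite (supp (Delta_gen C ar cp e x :: _ \<Rightarrow> 'k::comm_ring_1))"
proof (cases "finite (factorizations C ar cp x)")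
  case True
  then show ?thesis
    unfolding Delta_gen_def by (intro finite_supp_sum finite_supp_indicator)
next
  case False
  then show ?thesis by (simp add: supp_def Delta_gen_def)
qed

lemma Delta_word_Nil: "Delta_word C ar cp e [] = basis ([], [])"
  by (simp add: Delta_word_def)

lemma Delta_word_Cons:
  "Delta_word C ar cp e (x # w) = Tmult (Delta_gen C ar cp e x) (Delta_word C ar cp e w)"
  by (simp add: Delta_word_def)

lemma finite_supp_Tmult:
  fixes a b :: "'o list \<times> 'o list \<Rightarrow> 'k::comm_ring_1"
  shows "finite (supp a) \<Longrightarrow> finite (supp b) \<Longrightarrow> finite (supp (Tmult a b))"
  unfolding Tmult_def by (intro finite_supp_sum finite_supp_indicator)

lemma finite_supp_Nmult:
  fixes a b :: "'o list \<Rightarrow> 'k::comm_ring_1"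
  shows "finite (supp a) \<Longrightarrow> finite (supp b) \<Longrightarrow> finite (supp (Nmult a b))"
  unfolding Nmult_def by (intro finite_supp_sum finite_supp_indicator)

lemma finite_supp_lin_ext:
  fixes a :: "'a \<Rightarrow> 'k::comm_ring_1"
  shows "finite (supp a) \<Longrightarrow> (\<And>u. finite (supp (g u))) \<Longrightarrow> finite (supp (lin_ext g a))"
  unfolding lin_ext_def by (intro finite_supp_sum finite_supp_mult_left)

lemma finite_supp_Delta_word: "finite (supp (Delta_word C ar cp e w :: _ \<Rightarrow> 'k::comm_ring_1))"
  by (induction w) (simp_all add: Delta_word_Nil Delta_word_Cons finite_supp_Tmult finite_supp_Delta_gen)

section \<open>Pullback along a letterwise map\<close>

definition list_fibre :: "'a set \<Rightarrow> ('a \<Rightarrow> 'b) \<Rightarrow> 'b list \<Rightarrow> 'a list set" where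
  "list_fibre L p u = {f. set f \<subseteq> L \<and> map p f = u}"

definition pullback :: "'a set \<Rightarrow> ('a \<Rightarrow> 'b) \<Rightarrow> ('b list \<Rightarrow> 'k::zero) \<Rightarrow> 'a list \<Rightarrow> 'k" where
  "pullback L p a = (\<lambda>f. if set f \<subseteq> L then a (map p f) else 0)"

definition pullback2 ::
  "'a set \<Rightarrow> ('a \<Rightarrow> 'b) \<Rightarrow> ('b list \<times> 'b list \<Rightarrow> 'k::zero) \<Rightarrow> 'a list \<times> 'a list \<Rightarrow> 'k" where
  "pullback2 L p T = (\<lambda>(f, g). if set f \<subseteq> L \<and> set g \<subseteq> L then T (map p f, map p g) else 0)"

lemma list_fibre_Nil [simp]: "list_fibre L p [] = {[]}"
  by (auto simp: list_fibre_def)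

lemma list_fibre_Cons:
  "list_fibre L p (y # u) = (\<lambda>(x, f). x # f) ` ({x \<in> L. p x = y} \<times> list_fibre L p u)"
  by (auto simp: list_fibre_def map_eq_Cons_conv)

lemma finite_list_fibre:
  assumes "\<And>y. finite {x \<in> L. p x = y}"
  shows "finite (list_fibre L p u)"
  by (induction u) (simp_all add: list_fibre_Cons assms)

lemma supp_pullback: "supp (pullback L p a) = (\<Union>u\<in>supp a. list_fibre L p u)"
  by (auto simp: supp_def pullback_def list_fibre_def)

lemma supp_pullback2:
  "supp (pullback2 L p T) \<subseteq> (\<Union>(u, v)\<in>supp T. list_fibre L p u \<times> list_fibre L p v)"
  by (auto simp: supp_def pullback2_def list_fibre_def split: if_splits)

context
  fixes L :: "'a set" and p :: "'a \<Rightarrow> 'b"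
  assumes finite_fibres: "\<And>y. finite {x \<in> L. p x = y}"
begin

lemma finite_supp_pullback: "finite (supp a) \<Longrightarrow> finite (supp (pullback L p a))"
  unfolding supp_pullback by (simp add: finite_list_fibre finite_fibres)

lemma finite_supp_pullback2: "finite (supp T) \<Longrightarrow> finite (supp (pullback2 L p T))"
  by (rule finite_subset[OF supp_pullback2]) (auto simp: finite_list_fibre finite_fibres)

lemma Nmult_pullback:
  fixes a b :: "'b list \<Rightarrow> 'k::comm_ring_1"
  assumes "finite (supp a)" "finite (supp b)"
  shows "Nmult (pullback L p a) (pullback L p b) = pullback L p (Nmult a b)"
proof
  fix g
  have split_lists: "set (take k g) \<subseteq> L \<and> set (drop k g) \<subseteq> L \<longleftrightarrow> set g \<subseteq> L" for k
    by (metis append_take_drop_id set_append le_sup_iff)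
  have "Nmult (pullback L p a) (pullback L p b) g
      = (\<Sum>k\<le>length g. pullback L p a (take k g) * pullback L p b (drop k g))"
    using assms by (simp add: Nmult_eq_sum_splits finite_supp_pullback)
  also have "\<dots> = (if set g \<subseteq> L then
      \<Sum>k\<le>length (map p g). a (take k (map p g)) * b (drop k (map p g)) else 0)"
  proof (cases "set g \<subseteq> L")
    case True
    then show ?thesis using split_lists by (simp add: pullback_def take_map drop_map)
  next
    case False
    then show ?thesis using split_lists by (auto simp: pullback_def intro!: sum.neutral)
  qed
  also have "\<dots> = pullback L p (Nmult a b) g"
    using assms by (simp add: pullback_def Nmult_eq_sum_splits)
  finally show "Nmult (pullback L p a) (pullback L p b) g = pullback L p (Nmult a b) g" .
qed

lemma Tmult_pullback2:
  fixes A B :: "'b list \<times> 'b list \<Rightarrow> 'k::comm_ring_1"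
  assumes "finite (supp A)" "finite (supp B)"
  shows "Tmult (pullback2 L p A) (pullback2 L p B) = pullback2 L p (Tmult A B)"
proof (intro ext, clarify)
  fix g h
  have split_lists: "set (take k g) \<subseteq> L \<and> set (drop k g) \<subseteq> L \<longleftrightarrow> set g \<subseteq> L"
    "set (take k h) \<subseteq> L \<and> set (drop k h) \<subseteq> L \<longleftrightarrow> set h \<subseteq> L" for k
    by (metis append_take_drop_id set_append le_sup_iff)+
  have "Tmult (pullback2 L p A) (pullback2 L p B) (g, h)
      = (\<Sum>i\<le>length g. \<Sum>j\<le>length h.
          pullback2 L p A (take i g, take j h) * pullback2 L p B (drop i g, drop j h))"
    using assms by (simp add: Tmult_eq_sum_splits finite_supp_pullback2)
  also have "\<dots> = (if set g \<subseteq> L \<and> set h \<subseteq> L then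
      \<Sum>i\<le>length (map p g). \<Sum>j\<le>length (map p h).
        A (take i (map p g), take j (map p h)) * B (drop i (map p g), drop j (map p h)) else 0)"
  proof (cases "set g \<subseteq> L \<and> set h \<subseteq> L")
    case True
    then show ?thesis using split_lists by (simp add: pullback2_def take_map drop_map)
  next
    case False
    have "pullback2 L p A (take i g, take j h) * pullback2 L p B (drop i g, drop j h) = 0" for i j
      using False split_lists(1)[of i] split_lists(2)[of j] by (auto simp: pullback2_def)
    with False show ?thesis by auto
  qed
  also have "\<dots> = pullback2 L p (Tmult A B) (g, h)"
    using assms by (simp add: pullback2_def Tmult_eq_sum_splits)
  finally show "Tmult (pullback2 L p A) (pullback2 L p B) (g, h) = pullback2 L p (Tmult A B) (g, h)" .
qed

lemma lin_ext_fibre_basis: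
  fixes a :: "'b list \<Rightarrow> 'k::comm_ring_1"
  assumes "finite (supp a)"
  shows "lin_ext (\<lambda>u f. \<Sum>g\<in>list_fibre L p u. basis g f) a = pullback L p a"
proof
  fix f
  have fibre_sum: "(\<Sum>g\<in>list_fibre L p u. basis g f) = (if f \<in> list_fibre L p u then 1 else (0::'k))" for u
    unfolding basis_def by (simp add: finite_list_fibre finite_fibres)
  have "lin_ext (\<lambda>u f. \<Sum>g\<in>list_fibre L p u. basis g f) a f
      = (\<Sum>u\<in>supp a. if map p f = u then (if set f \<subseteq> L then a u else 0) else 0)"
    unfolding lin_ext_def fibre_sum by (intro sum.cong refl) (auto simp: list_fibre_def)
  also have "\<dots> = pullback L p a f"
    using assms by (auto simp: pullback_def supp_def)
  finally show "lin_ext (\<lambda>u f. \<Sum>g\<in>list_fibre L p u. basis g f) a f = pullback L p a f" .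
qed

lemma lin_ext_pullback:
  fixes a :: "'b list \<Rightarrow> 'k::comm_ring_1"
  assumes "finite (supp a)"
  shows "lin_ext D (pullback L p a) q = (\<Sum>u\<in>supp a. a u * (\<Sum>f\<in>list_fibre L p u. D f q))"
proof -
  have "lin_ext D (pullback L p a) q = (\<Sum>u\<in>supp a. \<Sum>f\<in>list_fibre L p u. pullback L p a f * D f q)"
    unfolding lin_ext_def supp_pullback
    by (rule sum.UNION_disjoint)
      (use assms finite_list_fibre[OF finite_fibres] in \<open>auto simp: list_fibre_def\<close>)
  also have "\<dots> = (\<Sum>u\<in>supp a. a u * (\<Sum>f\<in>list_fibre L p u. D f q))"
    by (auto simp: sum_distrib_left list_fibre_def pullback_def intro!: sum.cong)
  finally show ?thesis .
qed

end

lemma tensor_map_pullback2: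
  fixes T :: "'b list \<times> 'b list \<Rightarrow> 'k::comm_ring_1"
  assumes F: "\<And>u. F (basis u) = pullback L p (basis u)" and "finite (supp T)"
  shows "tensor_map F F T = pullback2 L p T"
proof
  fix q :: "'a list \<times> 'a list"
  have "tensor_map F F T q
      = (\<Sum>x\<in>supp T. if (map p (fst q), map p (snd q)) = x then
           (if set (fst q) \<subseteq> L \<and> set (snd q) \<subseteq> L then T x else 0) else 0)"
    unfolding tensor_map_def lin_ext_def F
    by (intro sum.cong refl) (auto simp: tensor_def pullback_def basis_def split: prod.splits)
  also have "\<dots> = pullback2 L p T q"
    using assms(2) by (auto simp: pullback2_def supp_def split: prod.splits)
  finally show "tensor_map F F T q = pullback2 L p T q" .
qed

lemma pullback_inj_on:
  "inj_on (pullback L p :: ('b list \<Rightarrow> 'k::zero) \<Rightarrow> _) {a. supp a \<subseteq> lists (p ` L)}"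
proof (rule inj_onI, rule ext)
  fix a b :: "'b list \<Rightarrow> 'k" and w
  assume a: "a \<in> {a. supp a \<subseteq> lists (p ` L)}" and b: "b \<in> {a. supp a \<subseteq> lists (p ` L)}"
    and eq: "pullback L p a = pullback L p b"
  show "a w = b w"
  proof (cases "w \<in> lists (p ` L)")
    case True
    define f where "f = map (inv_into L p) w"
    have "set f \<subseteq> L" "map p f = w"
      using True by (auto simp: f_def inv_into_into f_inv_into_f intro!: map_idI)
    then show ?thesis
      using fun_cong[OF eq, of f] by (simp add: pullback_def)
  next
    case False
    then have "w \<notin> supp a" "w \<notin> supp b"
      using a b by auto
    then show ?thesis by (simp add: supp_def)
  qed
qed

lemma pullback2_lin_ext:
  "pullback2 L p (lin_ext G a) = (\<lambda>q. \<Sum>u\<in>supp a. a u * pullback2 L p (G u) q)"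
proof (intro ext, clarify)
  fix f g
  show "pullback2 L p (lin_ext G a) (f, g) = (\<Sum>u\<in>supp a. a u * pullback2 L p (G u) (f, g))"
  proof (cases "set f \<subseteq> L \<and> set g \<subseteq> L")
    case True
    then show ?thesis
      by (simp only: pullback2_def lin_ext_def split_conv if_P)
  next
    case False
    then show ?thesis
      by (simp only: pullback2_def split_conv if_not_P if_False mult_zero_right sum.neutral_const)
  qed
qed

section \<open>The quotient operad\<close>

locale graded_finite_congruence =
  fixes S :: "'f set" and ar :: "'f \<Rightarrow> nat" and R :: "('f sterm \<times> 'f sterm) set"
  assumes congruence: "operad_congruence S ar R"
    and degree: "degree_compatible R"
    and finite_classes: "finite_type S ar R"
begin

abbreviation "TT \<equiv> terms S ar"
abbreviation "Q \<equiv> TT // R"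
abbreviation "\<pi> \<equiv> qproj R"

lemma equiv_R: "equiv TT R"
  using congruence by (simp add: operad_congruence_def)

lemma R_in_terms: "(t, t') \<in> R \<Longrightarrow> t \<in> TT \<and> t' \<in> TT"
  using equiv_R by (auto simp: equiv_def refl_on_def)

lemma R_refl: "t \<in> TT \<Longrightarrow> (t, t) \<in> R"
  using equiv_R by (auto simp: equiv_def refl_on_def)

lemma R_trans: "(t, t') \<in> R \<Longrightarrow> (t', t'') \<in> R \<Longrightarrow> (t, t'') \<in> R"
  using equiv_R unfolding equiv_def by (meson transD)

lemma R_tarity: "(t, t') \<in> R \<Longrightarrow> tarity t = tarity t'"
  using congruence by (auto simp: operad_congruence_def)

lemma R_tdeg: "(t, t') \<in> R \<Longrightarrow> tdeg t = tdeg t'"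
  using degree by (auto simp: degree_compatible_def)

lemma R_pcomp_left:
  "(t, t') \<in> R \<Longrightarrow> s \<in> TT \<Longrightarrow> 1 \<le> i \<Longrightarrow> i \<le> tarity t \<Longrightarrow> (pcomp t i s, pcomp t' i s) \<in> R"
  using congruence by (auto simp: operad_congruence_def)

lemma R_pcomp_right:
  "(t, t') \<in> R \<Longrightarrow> s \<in> TT \<Longrightarrow> 1 \<le> j \<Longrightarrow> j \<le> tarity s \<Longrightarrow> (pcomp s j t, pcomp s j t') \<in> R"
  using congruence by (auto simp: operad_congruence_def)

lemma Bot_in_terms [simp]: "Bot \<in> TT"
  by (simp add: terms_def wf_Bot)

lemma qproj_in_quotient [intro]: "t \<in> TT \<Longrightarrow> \<pi> t \<in> Q"
  by (simp add: qproj_def quotientI)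

lemma in_qproj: "t \<in> TT \<Longrightarrow> t \<in> \<pi> t"
  by (simp add: qproj_def R_refl)

lemma qproj_class: "X \<in> Q \<Longrightarrow> t \<in> X \<Longrightarrow> \<pi> t = X"
  unfolding qproj_def using equiv_R by (metis Image_singleton_iff equiv_class_eq quotientE)

lemma class_subset_terms: "X \<in> Q \<Longrightarrow> X \<subseteq> TT"
  by (auto elim!: quotientE dest: R_in_terms)

lemma class_finite: "X \<in> Q \<Longrightarrow> finite X"
  using finite_classes by (simp add: finite_type_def)

lemma qrep_in_class: "X \<in> Q \<Longrightarrow> qrep X \<in> X"
  unfolding qrep_def using equiv_R by (metis ex_in_conv in_quotient_imp_non_empty someI_ex)

lemma qproj_qrep: "X \<in> Q \<Longrightarrow> \<pi> (qrep X) = X"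
  using qproj_class qrep_in_class by blast

lemma qproj_eq_iff: "t \<in> TT \<Longrightarrow> t' \<in> TT \<Longrightarrow> \<pi> t = \<pi> t' \<longleftrightarrow> (t, t') \<in> R"
  unfolding qproj_def using equiv_R by (simp add: equiv_class_eq_iff)

lemma qarity_qproj:
  assumes "t \<in> TT"
  shows "qarity (\<pi> t) = tarity t"
proof -
  have "qrep (\<pi> t) \<in> TT" "\<pi> (qrep (\<pi> t)) = \<pi> t"
    using assms qrep_in_class[of "\<pi> t"] class_subset_terms[of "\<pi> t"] qproj_qrep by auto
  then show ?thesis
    unfolding qarity_def using assms qproj_eq_iff R_tarity by metis
qed

text \<open>Degree compatibility makes the unit class a singleton.\<close>

lemma qproj_Bot: "\<pi> Bot = {Bot}"
proof -
  have "t = Bot" if "(Bot, t) \<in> R" for t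
    using R_tdeg[OF that] by (cases t) auto
  then show ?thesis
    using R_refl[of Bot] by (auto simp: qproj_def)
qed

lemma qproj_eq_Bot_iff: "t \<in> TT \<Longrightarrow> \<pi> t = \<pi> Bot \<longleftrightarrow> t = Bot"
  using in_qproj qproj_Bot by auto

text \<open>Substitute the arguments one at a time: each step is a left partial composition with the
  next argument, compatible with R on both sides.\<close>

lemma tcomp_cong:
  assumes t: "(t, t') \<in> R" and len: "length ss = tarity t"
    and ss: "list_all2 (\<lambda>s s'. (s, s') \<in> R) ss ss'"
  shows "(tcomp t ss, tcomp t' ss') \<in> R"
proof -
  have len': "length ss' = tarity t'"
    using ss len R_tarity[OF t] by (simp add: list_all2_lengthD[symmetric])
  have R_nth: "(ss ! k, ss' ! k) \<in> R" if "k < length ss" for k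
    using ss that by (simp add: list_all2_conv_all_nth)
  have tarity_ss: "map tarity ss = map tarity ss'"
    using ss by (induction rule: list_all2_induct) (auto dest: R_tarity)
  have ss_terms: "set ss \<subseteq> TT" "set ss' \<subseteq> TT"
    using ss by (induction rule: list_all2_induct) (auto dest: R_in_terms)
  have "(tcomp t (prefix_args ss k), tcomp t' (prefix_args ss' k)) \<in> R" if "k \<le> length ss" for k
    using that
  proof (induction k)
    case 0
    then show ?case using t len len' by simp
  next
    case (Suc k)
    let ?u = "tcomp t (prefix_args ss k)" and ?u' = "tcomp t' (prefix_args ss' k)"
    define i where "i = sum_list (map tarity (take k ss)) + 1"
    have k: "k < length ss" "k < length ss'"
      using Suc.prems list_all2_lengthD[OF ss] by auto
    have i': "i = sum_list (map tarity (take k ss')) + 1"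
      using tarity_ss by (simp add: i_def flip: take_map)
    have IH: "(?u, ?u') \<in> R"
      using Suc by simp
    have i_bounds: "1 \<le> i" "i \<le> tarity ?u" "i \<le> tarity ?u'"
      using k len sum_list_tarity_prefix_args[of k ss] R_tarity[OF IH] by (auto simp: i_def)
    have "set (prefix_args ss' k) \<subseteq> TT"
      using ss_terms(2) by (auto simp: prefix_args_def dest: in_set_takeD)
    then have "?u' \<in> TT"
      by (rule tcomp_in_terms[rotated]) (use R_in_terms[OF t] in simp)
    then have "(pcomp ?u' i (ss ! k), pcomp ?u' i (ss' ! k)) \<in> R"
      by (rule R_pcomp_right[OF R_nth[OF k(1)] _ i_bounds(1,3)])
    moreover have "(pcomp ?u i (ss ! k), pcomp ?u' i (ss ! k)) \<in> R"
      using ss_terms k by (intro R_pcomp_left[OF IH _ i_bounds(1,2)]) auto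
    ultimately have "(pcomp ?u i (ss ! k), pcomp ?u' i (ss' ! k)) \<in> R"
      by (rule R_trans[rotated])
    then show ?case
      using tcomp_prefix_args_Suc[OF len k(1)] tcomp_prefix_args_Suc[OF len' k(2)]
      unfolding i_def[symmetric] i'[symmetric] by simp
  qed
  from this[of "length ss"] show ?thesis
    using list_all2_lengthD[OF ss] by (simp del: prefix_args_length add: prefix_args_def)
qed

lemma qcomp_qproj:
  assumes "t \<in> TT" "set ss \<subseteq> TT" "length ss = tarity t"
  shows "qcomp R (\<pi> t) (map \<pi> ss) = \<pi> (tcomp t ss)"
proof -
  have "(tcomp (qrep (\<pi> t)) (map (qrep \<circ> \<pi>) ss), tcomp t ss) \<in> R"
  proof (rule tcomp_cong)
    have rep: "(qrep (\<pi> u), u) \<in> R" if "u \<in> TT" for u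
      using that qproj_eq_iff qproj_qrep qrep_in_class class_subset_terms by blast
    show "(qrep (\<pi> t), t) \<in> R"
      using rep assms(1) .
    show "list_all2 (\<lambda>s s'. (s, s') \<in> R) (map (qrep \<circ> \<pi>) ss) ss"
      using assms(2) rep by (induction ss) auto
    show "length (map (qrep \<circ> \<pi>) ss) = tarity (qrep (\<pi> t))"
      using assms qarity_qproj by (simp add: qarity_def)
  qed
  then show ?thesis
    unfolding qcomp_def by (metis R_in_terms map_map qproj_eq_iff)
qed

abbreviation "F\<^sub>T \<equiv> factorizations TT tarity tcomp"
abbreviation "F\<^sub>Q \<equiv> factorizations Q qarity (qcomp R)"

lemma qproj_factorization:
  assumes "(s, ss) \<in> F\<^sub>T t" "x \<in> Q" "t \<in> x"
  shows "(\<pi> s, map \<pi> ss) \<in> F\<^sub>Q x"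
  using assms qcomp_qproj[of s ss] qarity_qproj[of s] qproj_class[OF assms(2,3)]
  by (auto simp: factorizations_def)

lemma quotient_factorizations_subset:
  assumes "x \<in> Q"
  shows "F\<^sub>Q x \<subseteq> (\<lambda>(s, ss). (\<pi> s, map \<pi> ss)) ` (\<Union>t\<in>x. F\<^sub>T t)"
proof clarify
  fix Y Ys assume "(Y, Ys) \<in> F\<^sub>Q x"
  then have Y: "Y \<in> Q" "set Ys \<subseteq> Q" "length Ys = qarity Y" "qcomp R Y Ys = x"
    by (auto simp: factorizations_def)
  define s ss where "s = qrep Y" and "ss = map qrep Ys"
  have terms: "s \<in> TT" "set ss \<subseteq> TT"
    using Y(1,2) qrep_in_class class_subset_terms by (auto simp: s_def ss_def)
  have "tcomp s ss \<in> x"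
    using Y(4) in_qproj[OF tcomp_in_terms[OF terms]] by (simp add: qcomp_def s_def ss_def)
  moreover have "(s, ss) \<in> F\<^sub>T (tcomp s ss)"
    using terms Y(3) by (simp add: factorizations_def s_def ss_def qarity_def)
  moreover have "(Y, Ys) = (\<pi> s, map \<pi> ss)"
    using Y(1,2) qproj_qrep by (auto simp: s_def ss_def intro!: map_idI[symmetric])
  ultimately show "(Y, Ys) \<in> (\<lambda>(s, ss). (\<pi> s, map \<pi> ss)) ` (\<Union>t\<in>x. F\<^sub>T t)"
    by (intro image_eqI[of _ _ "(s, ss)"] UN_I) simp_all
qed

lemma finite_quotient_factorizations: "x \<in> Q \<Longrightarrow> finite (F\<^sub>Q x)"
  by (rule finite_subset[OF quotient_factorizations_subset])
    (simp_all add: class_finite finite_factorizations_tcomp)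

abbreviation "L \<equiv> TT - {Bot}"

lemma qproj_eq_Bot_iff_ball: "set xs \<subseteq> TT \<Longrightarrow> \<forall>x\<in>set xs. \<pi> x = \<pi> Bot \<longleftrightarrow> x = Bot"
  using qproj_eq_Bot_iff by blast

lemma qproj_lift_unique:
  assumes "set xs \<subseteq> TT" "set xs' \<subseteq> TT" "map \<pi> xs = map \<pi> xs'" "rd Bot xs = rd Bot xs'"
  shows "xs = xs'"
proof (rule rd_lift_unique[of xs xs' \<pi> "\<pi> Bot" Bot])
  show "\<forall>x\<in>set xs \<union> set xs'. \<pi> x = \<pi> Bot \<longleftrightarrow> x = Bot"
    using assms(1,2) qproj_eq_Bot_iff by blast
qed (use assms in simp_all)

lemma qproj_lift_exists:
  assumes "rd (\<pi> Bot) ys = map \<pi> zs" "set zs \<subseteq> L"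
  obtains xs where "map \<pi> xs = ys" "rd Bot xs = zs" "set xs \<subseteq> TT"
proof -
  obtain xs where "map \<pi> xs = ys" "rd Bot xs = zs" "set xs \<subseteq> insert Bot (set zs)"
    using rd_lift_exists[of \<pi> Bot "\<pi> Bot" ys zs] assms(1) by blast
  with assms(2) show thesis
    by (intro that) auto
qed

lemma lift_quotient_factorization:
  assumes x: "x \<in> Q" and gh: "set g \<subseteq> L" "set h \<subseteq> L"
    and fact: "(Y, Ys) \<in> F\<^sub>Q x" and rd: "rd (\<pi> Bot) [Y] = map \<pi> g" "rd (\<pi> Bot) Ys = map \<pi> h"
  obtains s ss where "(s, ss) \<in> F\<^sub>T (tcomp s ss)" "tcomp s ss \<in> x" "Y = \<pi> s" "Ys = map \<pi> ss"
    "rd Bot [s] = g" "rd Bot ss = h"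
proof -
  obtain s' where s': "map \<pi> s' = [Y]" "rd Bot s' = g" "set s' \<subseteq> TT"
    by (rule qproj_lift_exists[OF rd(1) gh(1)])
  then obtain s where s: "s' = [s]"
    by (auto simp: map_eq_Cons_conv)
  obtain ss where ss: "map \<pi> ss = Ys" "rd Bot ss = h" "set ss \<subseteq> TT"
    by (rule qproj_lift_exists[OF rd(2) gh(2)])
  have terms: "s \<in> TT" "set ss \<subseteq> TT"
    using s s' ss by auto
  have Y: "Y = \<pi> s" "length Ys = qarity Y" "qcomp R Y Ys = x"
    using fact s s' by (auto simp: factorizations_def)
  then have "length ss = tarity s"
    using ss(1) qarity_qproj[OF terms(1)] by auto
  moreover have "tcomp s ss \<in> x"
    using in_qproj[OF tcomp_in_terms[OF terms]] qcomp_qproj[OF terms] Y ss(1) \<open>length ss = tarity s\<close>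
    by simp
  ultimately show thesis
    using terms s s' ss Y(1) by (intro that) (auto simp: factorizations_def)
qed

text \<open>A factorization in the quotient with prescribed reduced projections lifts uniquely:
  the unit letters must lift to Bot and the others are read off the reduced lifts.\<close>

lemma bij_betw_qproj_factorizations:
  assumes x: "x \<in> Q" and gh: "set g \<subseteq> L" "set h \<subseteq> L"
  shows "bij_betw (\<lambda>(s, ss). (\<pi> s, map \<pi> ss))
    {(s, ss) \<in> (\<Union>t\<in>x. F\<^sub>T t). rd Bot [s] = g \<and> rd Bot ss = h}
    {(Y, Ys) \<in> F\<^sub>Q x. rd (\<pi> Bot) [Y] = map \<pi> g \<and> rd (\<pi> Bot) Ys = map \<pi> h}"
proof (rule bij_betw_imageI)
  show "inj_on (\<lambda>(s, ss). (\<pi> s, map \<pi> ss))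
      {(s, ss) \<in> (\<Union>t\<in>x. F\<^sub>T t). rd Bot [s] = g \<and> rd Bot ss = h}"
  proof (rule inj_onI)
    fix q q'
    assume "q \<in> {(s, ss) \<in> (\<Union>t\<in>x. F\<^sub>T t). rd Bot [s] = g \<and> rd Bot ss = h}"
      and "q' \<in> {(s, ss) \<in> (\<Union>t\<in>x. F\<^sub>T t). rd Bot [s] = g \<and> rd Bot ss = h}"
      and "(\<lambda>(s, ss). (\<pi> s, map \<pi> ss)) q = (\<lambda>(s, ss). (\<pi> s, map \<pi> ss)) q'"
    then show "q = q'"
      using qproj_lift_unique[of "[fst q]" "[fst q']"] qproj_lift_unique[of "snd q" "snd q'"]
      by (auto simp: factorizations_def prod_eq_iff split: prod.splits)
  qed
next
  show "(\<lambda>(s, ss). (\<pi> s, map \<pi> ss)) ` {(s, ss) \<in> (\<Union>t\<in>x. F\<^sub>T t). rd Bot [s] = g \<and> rd Bot ss = h}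
      = {(Y, Ys) \<in> F\<^sub>Q x. rd (\<pi> Bot) [Y] = map \<pi> g \<and> rd (\<pi> Bot) Ys = map \<pi> h}"
  proof (intro equalityI subsetI)
    fix q assume "q \<in> (\<lambda>(s, ss). (\<pi> s, map \<pi> ss)) `
      {(s, ss) \<in> (\<Union>t\<in>x. F\<^sub>T t). rd Bot [s] = g \<and> rd Bot ss = h}"
    then obtain s ss t where q: "q = (\<pi> s, map \<pi> ss)" and "t \<in> x" "(s, ss) \<in> F\<^sub>T t"
      and rd: "rd Bot [s] = g" "rd Bot ss = h"
      by auto
    then have "(\<pi> s, map \<pi> ss) \<in> F\<^sub>Q x"
      by (intro qproj_factorization[OF _ x])
    moreover have "set [s] \<subseteq> TT" "set ss \<subseteq> TT"
      using \<open>(s, ss) \<in> F\<^sub>T t\<close> by (auto simp: factorizations_def)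
    then have "rd (\<pi> Bot) [\<pi> s] = map \<pi> g" "rd (\<pi> Bot) (map \<pi> ss) = map \<pi> h"
      using rd_map[OF qproj_eq_Bot_iff_ball, of "[s]"] rd_map[OF qproj_eq_Bot_iff_ball, of ss] rd
      by simp_all
    ultimately show "q \<in> {(Y, Ys) \<in> F\<^sub>Q x. rd (\<pi> Bot) [Y] = map \<pi> g \<and> rd (\<pi> Bot) Ys = map \<pi> h}"
      using q by simp
  next
    fix q assume "q \<in> {(Y, Ys) \<in> F\<^sub>Q x. rd (\<pi> Bot) [Y] = map \<pi> g \<and> rd (\<pi> Bot) Ys = map \<pi> h}"
    then obtain Y Ys where q: "q = (Y, Ys)" and "(Y, Ys) \<in> F\<^sub>Q x"
      and "rd (\<pi> Bot) [Y] = map \<pi> g" "rd (\<pi> Bot) Ys = map \<pi> h"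
      by auto
    then obtain s ss where "(s, ss) \<in> F\<^sub>T (tcomp s ss)" "tcomp s ss \<in> x" "Y = \<pi> s" "Ys = map \<pi> ss"
      "rd Bot [s] = g" "rd Bot ss = h"
      using lift_quotient_factorization[OF x gh] by metis
    then show "q \<in> (\<lambda>(s, ss). (\<pi> s, map \<pi> ss)) `
        {(s, ss) \<in> (\<Union>t\<in>x. F\<^sub>T t). rd Bot [s] = g \<and> rd Bot ss = h}"
      using q by (intro image_eqI[of _ _ "(s, ss)"]) auto
  qed
qed

lemma sum_Delta_gen_class:
  assumes x: "x \<in> Q"
  shows "(\<lambda>q. \<Sum>t\<in>x. Delta_gen TT tarity tcomp Bot t q)
    = (pullback2 L \<pi> (Delta_gen Q qarity (qcomp R) (\<pi> Bot) x) :: _ \<Rightarrow> 'k::comm_ring_1)"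
proof (intro ext, clarify)
  fix g h
  define lifts where "lifts = {(s, ss) \<in> (\<Union>t\<in>x. F\<^sub>T t). rd Bot [s] = g \<and> rd Bot ss = h}"
  have fin: "finite (\<Union>t\<in>x. F\<^sub>T t)"
    using class_finite[OF x] by (simp add: finite_factorizations_tcomp)
  have "(\<Sum>t\<in>x. Delta_gen TT tarity tcomp Bot t (g, h))
      = (\<Sum>q\<in>(\<Union>t\<in>x. F\<^sub>T t). if (rd Bot [fst q], rd Bot (snd q)) = (g, h) then 1 else (0::'k))"
    unfolding Delta_gen_def
    by (rule sum.UNION_disjoint[symmetric])
      (simp_all add: class_finite[OF x] finite_factorizations_tcomp, auto simp: factorizations_def)
  also have "\<dots> = of_nat (card lifts)"
    using fin by (simp add: sum_indicator_eq_card lifts_def split_def)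
  also have "\<dots> = pullback2 L \<pi> (Delta_gen Q qarity (qcomp R) (\<pi> Bot) x) (g, h)"
  proof (cases "set g \<subseteq> L \<and> set h \<subseteq> L")
    case True
    then have "card lifts = card {(Y, Ys) \<in> F\<^sub>Q x. rd (\<pi> Bot) [Y] = map \<pi> g \<and> rd (\<pi> Bot) Ys = map \<pi> h}"
      unfolding lifts_def using bij_betw_qproj_factorizations[OF x] by (intro bij_betw_same_card) auto
    with True show ?thesis
      by (simp add: pullback2_def Delta_gen_def sum_indicator_eq_card finite_quotient_factorizations x
          split_def)
  next
    case False
    have "lifts = {}"
      using False by (auto simp: lifts_def factorizations_def rd_def)
    with False show ?thesis
      by (auto simp: pullback2_def)
  qed
  finally show "(\<Sum>t\<in>x. Delta_gen TT tarity tcomp Bot t (g, h))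
      = (pullback2 L \<pi> (Delta_gen Q qarity (qcomp R) (\<pi> Bot) x) (g, h) :: 'k)" .
qed

lemma finite_qproj_fibres: "finite {t \<in> L. \<pi> t = X}"
proof -
  have "{t \<in> L. \<pi> t = X} \<subseteq> (if X \<in> Q then X else {})"
    using in_qproj qproj_in_quotient by auto
  then show ?thesis
    by (rule finite_subset) (simp add: class_finite)
qed

lemma qproj_fibre_class:
  assumes "X \<in> Q" "X \<noteq> \<pi> Bot"
  shows "{t \<in> L. \<pi> t = X} = X"
proof (intro equalityI subsetI)
  fix t assume "t \<in> {t \<in> L. \<pi> t = X}"
  then show "t \<in> X"
    using in_qproj by auto
next
  fix t assume "t \<in> X"
  then have "t \<in> TT" "\<pi> t = X"
    using assms(1) class_subset_terms qproj_class by auto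
  with assms(2) show "t \<in> {t \<in> L. \<pi> t = X}"
    by auto
qed

lemma sum_Delta_word_fibre:
  assumes "w \<in> red_words Q (\<pi> Bot)"
  shows "(\<lambda>q. \<Sum>f\<in>list_fibre L \<pi> w. Delta_word TT tarity tcomp Bot f q)
    = (pullback2 L \<pi> (Delta_word Q qarity (qcomp R) (\<pi> Bot) w) :: _ \<Rightarrow> 'k::comm_ring_1)"
  using assms
proof (induction w)
  case Nil
  show ?case
    by (auto simp: Delta_word_Nil pullback2_def basis_def)
next
  case (Cons x w)
  then have x: "x \<in> Q" "x \<noteq> \<pi> Bot" and w: "w \<in> red_words Q (\<pi> Bot)"
    by (auto simp: red_words_def)
  have inj: "inj_on (\<lambda>(t, f). t # f) (x \<times> list_fibre L \<pi> w)"
    by (auto simp: inj_on_def)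
  have "(\<lambda>q. \<Sum>f\<in>list_fibre L \<pi> (x # w). Delta_word TT tarity tcomp Bot f q)
      = (\<lambda>q. \<Sum>t\<in>x. \<Sum>f\<in>list_fibre L \<pi> w.
           Tmult (Delta_gen TT tarity tcomp Bot t) (Delta_word TT tarity tcomp Bot f) q :: 'k)"
    unfolding list_fibre_Cons qproj_fibre_class[OF x] sum.reindex[OF inj] sum.cartesian_product
    by (simp add: Delta_word_Cons split_def)
  also have "\<dots> = Tmult (\<lambda>q. \<Sum>t\<in>x. Delta_gen TT tarity tcomp Bot t q)
      (\<lambda>q. \<Sum>f\<in>list_fibre L \<pi> w. Delta_word TT tarity tcomp Bot f q)"
    by (rule Tmult_sum_sum[symmetric])
      (simp_all add: class_finite x finite_list_fibre[OF finite_qproj_fibres] finite_supp_Delta_gen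
        finite_supp_Delta_word)
  also have "\<dots> = pullback2 L \<pi> (Delta_word Q qarity (qcomp R) (\<pi> Bot) (x # w))"
    unfolding sum_Delta_gen_class[OF x(1)] Cons.IH[OF w] Delta_word_Cons
    by (rule Tmult_pullback2[OF finite_qproj_fibres finite_supp_Delta_gen finite_supp_Delta_word])
  finally show ?case .
qed

lemma fiber_forests_eq_list_fibre: "fiber_forests S ar R x = list_fibre L \<pi> x"
  by (auto simp: fiber_forests_def list_fibre_def red_words_def)

context
  fixes \<phi> :: "('f sterm set list \<Rightarrow> 'k::field) \<Rightarrow> 'f sterm list \<Rightarrow> 'k"
  defines "\<phi> \<equiv> phi S ar R"
begin

lemma phi_eq_pullback: "finite (supp a) \<Longrightarrow> \<phi> a = pullback L \<pi> a"
  unfolding \<phi>_def phi_def fiber_forests_eq_list_fibre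
  by (rule lin_ext_fibre_basis[OF finite_qproj_fibres])

lemma phi_in_Nspace:
  assumes "a \<in> Nspace Q (\<pi> Bot)"
  shows "\<phi> a \<in> Nspace TT Bot"
proof -
  have "finite (supp a)"
    using assms by (simp add: Nspace_iff)
  moreover from this have "finite (supp (pullback L \<pi> a))"
    by (rule finite_supp_pullback[OF finite_qproj_fibres])
  moreover have "supp (pullback L \<pi> a) \<subseteq> lists L"
    by (auto simp: supp_pullback list_fibre_def)
  ultimately show ?thesis
    by (simp add: Nspace_iff phi_eq_pullback)
qed

lemma phi_add:
  "a \<in> Nspace Q (\<pi> Bot) \<Longrightarrow> b \<in> Nspace Q (\<pi> Bot) \<Longrightarrow> \<phi> (\<lambda>w. a w + b w) = (\<lambda>w. \<phi> a w + \<phi> b w)"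
proof -
  assume "a \<in> Nspace Q (\<pi> Bot)" "b \<in> Nspace Q (\<pi> Bot)"
  moreover have "supp (\<lambda>w. a w + b w) \<subseteq> supp a \<union> supp b"
    by (auto simp: supp_def)
  ultimately have "finite (supp (\<lambda>w. a w + b w))" "finite (supp a)" "finite (supp b)"
    by (auto simp: Nspace_iff intro: finite_subset)
  then show ?thesis
    by (simp add: phi_eq_pullback pullback_def fun_eq_iff)
qed

lemma phi_scale: "a \<in> Nspace Q (\<pi> Bot) \<Longrightarrow> \<phi> (\<lambda>w. c * a w) = (\<lambda>w. c * \<phi> a w)"
  by (simp add: Nspace_iff phi_eq_pullback finite_supp_mult_left pullback_def fun_eq_iff)

lemma phi_Nmult:
  "a \<in> Nspace Q (\<pi> Bot) \<Longrightarrow> b \<in> Nspace Q (\<pi> Bot) \<Longrightarrow> \<phi> (Nmult a b) = Nmult (\<phi> a) (\<phi> b)"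
  by (simp add: Nspace_iff phi_eq_pullback finite_supp_Nmult Nmult_pullback[OF finite_qproj_fibres])

lemma phi_Nunit: "\<phi> Nunit = Nunit"
proof -
  have "\<phi> (basis []) = pullback L \<pi> (basis [])"
    by (simp add: phi_eq_pullback)
  then show ?thesis
    by (auto simp: Nunit_def pullback_def basis_def)
qed

lemma phi_Ncounit: "a \<in> Nspace Q (\<pi> Bot) \<Longrightarrow> Ncounit (\<phi> a) = Ncounit a"
  by (simp add: Nspace_iff Ncounit_def phi_eq_pullback pullback_def)

lemma phi_Ncoprod:
  assumes a: "a \<in> Nspace Q (\<pi> Bot)"
  shows "Ncoprod TT tarity tcomp Bot (\<phi> a) = tensor_map \<phi> \<phi> (Ncoprod Q qarity (qcomp R) (\<pi> Bot) a)"
proof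
  fix q
  have fa: "finite (supp a)" and sa: "supp a \<subseteq> red_words Q (\<pi> Bot)"
    using a by (simp_all add: Nspace_def)
  have "Ncoprod TT tarity tcomp Bot (\<phi> a) q
      = (\<Sum>w\<in>supp a. a w * (\<Sum>f\<in>list_fibre L \<pi> w. Delta_word TT tarity tcomp Bot f q))"
    unfolding Ncoprod_def phi_eq_pullback[OF fa] by (rule lin_ext_pullback[OF finite_qproj_fibres fa])
  also have "\<dots> = (\<Sum>w\<in>supp a. a w * pullback2 L \<pi> (Delta_word Q qarity (qcomp R) (\<pi> Bot) w) q)"
    using sa by (intro sum.cong refl) (simp add: sum_Delta_word_fibre[THEN fun_cong] subset_iff)
  also have "\<dots> = pullback2 L \<pi> (Ncoprod Q qarity (qcomp R) (\<pi> Bot) a) q"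
    by (simp add: Ncoprod_def pullback2_lin_ext)
  also have "\<dots> = tensor_map \<phi> \<phi> (Ncoprod Q qarity (qcomp R) (\<pi> Bot) a) q"
    unfolding Ncoprod_def
    by (rule tensor_map_pullback2[symmetric, THEN fun_cong])
      (simp_all add: phi_eq_pullback fa finite_supp_lin_ext finite_supp_Delta_word)
  finally show "Ncoprod TT tarity tcomp Bot (\<phi> a) q = tensor_map \<phi> \<phi> (Ncoprod Q qarity (qcomp R) (\<pi> Bot) a) q" .
qed

lemma red_words_quotient_subset: "red_words Q (\<pi> Bot) \<subseteq> lists (\<pi> ` L)"
proof
  fix w assume "w \<in> red_words Q (\<pi> Bot)"
  moreover have "X \<in> \<pi> ` L" if "X \<in> Q" "X \<noteq> \<pi> Bot" for X
    using that qproj_qrep[OF that(1)] qrep_in_class[OF that(1)] class_subset_terms[OF that(1)]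
    by (intro image_eqI[of _ _ "qrep X"]) auto
  ultimately show "w \<in> lists (\<pi> ` L)"
    by (auto simp: red_words_def)
qed

lemma inj_on_phi: "inj_on \<phi> (Nspace Q (\<pi> Bot))"
proof -
  have "inj_on (pullback L \<pi>) (Nspace Q (\<pi> Bot) :: ('f sterm set list \<Rightarrow> 'k) set)"
    by (rule inj_on_subset[OF pullback_inj_on])
      (use red_words_quotient_subset in \<open>auto simp: Nspace_def\<close>)
  then show ?thesis
    by (rule inj_on_cong[THEN iffD2, rotated]) (simp add: Nspace_iff phi_eq_pullback)
qed

end

end

theorem theorem3p5:
  fixes S :: "'f set" and ar :: "'f \<Rightarrow> nat" and R :: "('f sterm \<times> 'f sterm) set"
  assumes "operad_congruence S ar R"
    and "degree_compatible R"
    and "finite_type S ar R"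
  shows "(\<forall>x \<in> red_words (terms S ar // R) (qproj R Bot). finite (fiber_forests S ar R x))
     \<and> N_hopf_morphism (terms S ar // R) qarity (qcomp R) (qproj R Bot)
                       (terms S ar) tarity tcomp Bot
                       (phi S ar R :: ('f sterm set list \<Rightarrow> 'k::field_char_0) \<Rightarrow> _)
     \<and> inj_on (phi S ar R :: ('f sterm set list \<Rightarrow> 'k::field_char_0) \<Rightarrow> _)
              (Nspace (terms S ar // R) (qproj R Bot))"
proof -
  interpret graded_finite_congruence S ar R
    using assms by unfold_locales
  have "\<forall>x \<in> red_words Q (\<pi> Bot). finite (fiber_forests S ar R x)"
    by (simp add: fiber_forests_eq_list_fibre finite_list_fibre[OF finite_qproj_fibres])
  moreover have "N_hopf_morphism Q qarity (qcomp R) (\<pi> Bot) TT tarity tcomp Bot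
      (phi S ar R :: ('f sterm set list \<Rightarrow> 'k) \<Rightarrow> _)"
    unfolding N_hopf_morphism_def
    by (intro conjI ballI allI phi_in_Nspace phi_add phi_scale phi_Nmult phi_Nunit phi_Ncoprod
        phi_Ncounit)
  ultimately show ?thesis
    using inj_on_phi by blast
qed

end
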